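(* Let $N\ge 2$, let $\Omega\subset\mathbb{R}^N$ be a domain with $\overline{\Omega}$ compact, and let $\Omega_1\subset\Omega$ be an open subdomain whose boundary $\Gamma=\partial\Omega_1$ is a closed connected $C^2$ hypersurface contained in $\Omega$, with $\Omega_2=\Omega\setminus\overline{\Omega}_1$. Let $b_1,b_2>0$, $b=b_1$ on $\overline{\Omega}_1$, $b=b_2$ on $\Omega_2$, and $0<c_0<c_1$. Define $$\varphi(z)=\begin{cases}\frac{c_0-z}{c_1-z}, & z\le c_0,\\ 0, & z>c_0,\end{cases}\qquad F(s)=\begin{cases} s+(c_1-c_0)\log\frac{c_1-s}{c_1}, & s\le c_0,\\ c_0+(c_1-c_0)\log\frac{c_1-c_0}{c_1}, & s>c_0,\end{cases}$$ and $E:V\to\mathbb{R}$, $V=H^1_0(\Omega)$, by $E(u)=\int_\Omega \tfrac12 b|\nabla u|^2\,dx-\int_{\Omega_1}F(u)\,dx$, whose Fréchet derivative is $E'(u)[h]=\int_\Omega b\nabla u\cdot\nabla h\,dx-\int_{\Omega_1}\varphi(u)h\,dx$. Then $E'$ is strongly monotone: for all $u,v\in V$ there exists $\gamma>0$ such that $$(E'(u)-E'(v))[u-v]\ge \gamma\|u-v\|_V^2.$$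
   Context: $V=H^1_0(\Omega)$ carries the norm induced by the inner product $(u,v)_V=(u,v)_{L^2}+(\nabla u,\nabla v)_{L^2}$. *)

theory Defs
  imports "HOL-Analysis.Analysis"
begin

definition pd :: "'a::euclidean_space \<Rightarrow> ('a \<Rightarrow> real) \<Rightarrow> 'a \<Rightarrow> real" where
  "pd i f = (\<lambda>x. frechet_derivative f (at x) i)"

primrec pds :: "'a::euclidean_space list \<Rightarrow> ('a \<Rightarrow> real) \<Rightarrow> 'a \<Rightarrow> real" where
  "pds [] f = f"
| "pds (i # is) f = pd i (pds is f)"

definition cgrad :: "('a::euclidean_space \<Rightarrow> real) \<Rightarrow> 'a \<Rightarrow> 'a" where
  "cgrad f = (\<lambda>x. \<Sum>i\<in>Basis. pd i f x *\<^sub>R i)"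

(* test functions C_c^\<infinity>(\<Omega>) (extended by zero to the whole space) *)
definition test_fun :: "'a::euclidean_space set \<Rightarrow> ('a \<Rightarrow> real) \<Rightarrow> bool" where
  "test_fun \<Omega> \<psi> \<longleftrightarrow>
     (\<forall>ds. set ds \<subseteq> Basis \<longrightarrow> (\<forall>x. pds ds \<psi> differentiable (at x))) \<and>
     compact (closure {x. \<psi> x \<noteq> 0}) \<and> closure {x. \<psi> x \<noteq> 0} \<subseteq> \<Omega>"

definition L2 :: "'a::euclidean_space set \<Rightarrow> ('a \<Rightarrow> real) \<Rightarrow> bool" where
  "L2 \<Omega> f \<longleftrightarrow> set_borel_measurable lebesgue \<Omega> f \<and>
                 set_integrable lebesgue \<Omega> (\<lambda>x. (f x)\<^sup>2)"

definition L2vec :: "'a::euclidean_space set \<Rightarrow> ('a \<Rightarrow> 'a) \<Rightarrow> bool" where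
  "L2vec \<Omega> g \<longleftrightarrow> set_borel_measurable lebesgue \<Omega> g \<and>
                 set_integrable lebesgue \<Omega> (\<lambda>x. (norm (g x))\<^sup>2)"

definition weak_grad :: "'a::euclidean_space set \<Rightarrow> ('a \<Rightarrow> real) \<Rightarrow> ('a \<Rightarrow> 'a) \<Rightarrow> bool" where
  "weak_grad \<Omega> u g \<longleftrightarrow>
     (\<forall>\<psi>. test_fun \<Omega> \<psi> \<longrightarrow>
        (\<forall>i\<in>Basis. (LINT x:\<Omega>|lebesgue. u x * pd i \<psi> x)
                   = - (LINT x:\<Omega>|lebesgue. (g x \<bullet> i) * \<psi> x)))"

definition H1 :: "'a::euclidean_space set \<Rightarrow> ('a \<Rightarrow> real) \<Rightarrow> ('a \<Rightarrow> 'a) \<Rightarrow> bool" where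
  "H1 \<Omega> u g \<longleftrightarrow> L2 \<Omega> u \<and> L2vec \<Omega> g \<and> weak_grad \<Omega> u g"

definition Vnorm_sq :: "'a::euclidean_space set \<Rightarrow> ('a \<Rightarrow> real) \<Rightarrow> ('a \<Rightarrow> 'a) \<Rightarrow> real" where
  "Vnorm_sq \<Omega> u g = (LINT x:\<Omega>|lebesgue. (u x)\<^sup>2) + (LINT x:\<Omega>|lebesgue. (norm (g x))\<^sup>2)"

definition H10 :: "'a::euclidean_space set \<Rightarrow> ('a \<Rightarrow> real) \<Rightarrow> ('a \<Rightarrow> 'a) \<Rightarrow> bool" where
  "H10 \<Omega> u g \<longleftrightarrow> H1 \<Omega> u g \<and>
     (\<exists>\<psi>s. (\<forall>n. test_fun \<Omega> (\<psi>s n)) \<and>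
        (\<lambda>n. Vnorm_sq \<Omega> (\<lambda>x. \<psi>s n x - u x) (\<lambda>x. cgrad (\<psi>s n) x - g x)) \<longlonglongrightarrow> 0)"

(* closed (compact, boundaryless) connected C^2 hypersurface:
   compact, connected, locally the regular zero set of a C^2 function *)
definition C2_closed_hypersurface :: "'a::euclidean_space set \<Rightarrow> bool" where
  "C2_closed_hypersurface \<Gamma> \<longleftrightarrow> compact \<Gamma> \<and> connected \<Gamma> \<and> \<Gamma> \<noteq> {} \<and>
     (\<forall>x\<in>\<Gamma>. \<exists>U f g H. open U \<and> x \<in> U \<and>
        (\<forall>y\<in>U. (f has_derivative (\<lambda>h. g y \<bullet> h)) (at y) \<and>
                (g has_derivative blinfun_apply (H y)) (at y) \<and> g y \<noteq> 0) \<and>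
        continuous_on U (H :: 'a \<Rightarrow> 'a \<Rightarrow>\<^sub>L 'a) \<and>
        \<Gamma> \<inter> U = {y\<in>U. f y = (0::real)})"

definition phi :: "real \<Rightarrow> real \<Rightarrow> real \<Rightarrow> real" where
  "phi c0 c1 z = (if z \<le> c0 then (c0 - z) / (c1 - z) else 0)"

definition Fpot :: "real \<Rightarrow> real \<Rightarrow> real \<Rightarrow> real" where
  "Fpot c0 c1 s = (if s \<le> c0 then s + (c1 - c0) * ln ((c1 - s) / c1)
                   else c0 + (c1 - c0) * ln ((c1 - c0) / c1))"

definition coeff_b :: "'a::euclidean_space set \<Rightarrow> real \<Rightarrow> real \<Rightarrow> 'a \<Rightarrow> real" where
  "coeff_b \<Omega>1 b1 b2 x = (if x \<in> closure \<Omega>1 then b1 else b2)"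

definition Ederiv ::
  "'a::euclidean_space set \<Rightarrow> 'a set \<Rightarrow> ('a \<Rightarrow> real) \<Rightarrow> real \<Rightarrow> real \<Rightarrow>
   ('a \<Rightarrow> real) \<Rightarrow> ('a \<Rightarrow> 'a) \<Rightarrow> ('a \<Rightarrow> real) \<Rightarrow> ('a \<Rightarrow> 'a) \<Rightarrow> real" where
  "Ederiv \<Omega> \<Omega>1 b c0 c1 u gu h gh =
     (LINT x:\<Omega>|lebesgue. b x * (gu x \<bullet> gh x)) - (LINT x:\<Omega>1|lebesgue. phi c0 c1 (u x) * h x)"

end

theory Submission
  imports Defs
begin

text \<open>Testing \<open>E'(u) - E'(v)\<close> with \<open>w = u - v\<close>, the diffusion part is at least
  \<open>min b\<^sub>1 b\<^sub>2 \<parallel>\<nabla>w\<parallel>\<^sup>2\<close> and the reaction part \<open>- \<integral>\<^bsub>\<Omega>\<^sub>1\<^esub> (\<phi>(u) - \<phi>(v)) w\<close> is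
  nonnegative because \<open>\<phi>\<close> is nonincreasing. Since \<open>\<gamma>\<close> may depend on \<open>u\<close> and \<open>v\<close>, it only
  remains to show that \<open>\<nabla>w = 0\<close> forces \<open>w = 0\<close>. If \<open>\<partial>\<^sub>e w = 0\<close>, testing with
  \<open>x\<^sub>e \<psi>\<close> gives \<open>\<integral> w \<psi> = - \<integral> x\<^sub>e w \<partial>\<^sub>e \<psi>\<close> for test functions \<open>\<psi>\<close>, by density
  for all \<open>\<psi> \<in> H\<^sup>1\<^sub>0\<close>, and \<open>\<psi> = w\<close> yields \<open>\<integral> w\<^sup>2 = 0\<close>.\<close>

section \<open>Smooth functions and test functions\<close>

definition smooth_fun :: "('a::euclidean_space \<Rightarrow> real) \<Rightarrow> bool" where
  "smooth_fun f \<longleftrightarrow> (\<forall>ds. set ds \<subseteq> Basis \<longrightarrow> (\<forall>x. pds ds f differentiable (at x)))"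

lemma test_fun_iff_smooth_fun:
  "test_fun \<Omega> \<psi> \<longleftrightarrow> smooth_fun \<psi> \<and>
     compact (closure {x. \<psi> x \<noteq> 0}) \<and> closure {x. \<psi> x \<noteq> 0} \<subseteq> \<Omega>"
  unfolding test_fun_def smooth_fun_def ..

lemma smooth_fun_differentiable: "smooth_fun f \<Longrightarrow> f differentiable (at x)"
  unfolding smooth_fun_def by (metis empty_subsetI list.set(1) pds.simps(1))

lemma pds_append: "pds (ds @ es) f = pds ds (pds es f)"
  by (induction ds) auto

lemma smooth_fun_pd:
  assumes "smooth_fun f" "i \<in> Basis"
  shows "smooth_fun (pd i f)"
  unfolding smooth_fun_def
proof (intro allI impI)
  fix ds :: "'a list" and x
  assume "set ds \<subseteq> Basis"
  with assms have "pds (ds @ [i]) f differentiable (at x)"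
    unfolding smooth_fun_def by simp
  then show "pds ds (pd i f) differentiable (at x)"
    by (simp add: pds_append)
qed

lemma pd_add_scaled:
  assumes "f differentiable (at x)" "g differentiable (at x)"
  shows "pd i (\<lambda>y. f y + c * g y) x = pd i f x + c * pd i g x"
proof -
  have "((\<lambda>y. f y + c * g y) has_derivative
      (\<lambda>h. frechet_derivative f (at x) h + c * frechet_derivative g (at x) h)) (at x)"
    using assms by (intro has_derivative_add has_derivative_mult_right)
      (simp_all add: frechet_derivative_works)
  then show ?thesis
    unfolding pd_def by (simp add: frechet_derivative_at[symmetric])
qed

lemma pds_add_scaled:
  assumes "smooth_fun f" "smooth_fun g" "set ds \<subseteq> Basis"
  shows "pds ds (\<lambda>y. f y + c * g y) = (\<lambda>y. pds ds f y + c * pds ds g y)"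
  using assms(3)
proof (induction ds)
  case (Cons i ds)
  have "pds ds f differentiable (at x)" "pds ds g differentiable (at x)" for x
    using assms(1,2) Cons.prems unfolding smooth_fun_def by auto
  with Cons show ?case by (auto intro!: ext pd_add_scaled)
qed simp

lemma smooth_fun_add_scaled:
  assumes "smooth_fun f" "smooth_fun g"
  shows "smooth_fun (\<lambda>y. f y + c * g y)"
  using assms unfolding smooth_fun_def
  by (auto simp: pds_add_scaled[OF assms] intro!: differentiable_add differentiable_mult)

lemma differentiable_coordinate_mult:
  "f differentiable (at x) \<Longrightarrow> (\<lambda>y. (y \<bullet> e) * f y) differentiable (at x)"
  by (rule differentiable_mult[OF bounded_linear_imp_differentiable[OF bounded_linear_inner_left]])

lemma pd_coordinate_mult:
  assumes "f differentiable (at x)"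
  shows "pd i (\<lambda>y. (y \<bullet> e) * f y) x = (x \<bullet> e) * pd i f x + (i \<bullet> e) * f x"
proof -
  have "((\<lambda>y. (y \<bullet> e) * f y) has_derivative
      (\<lambda>h. (x \<bullet> e) * frechet_derivative f (at x) h + (h \<bullet> e) * f x)) (at x)"
    using assms by (intro has_derivative_mult has_derivative_inner_left has_derivative_ident)
      (simp add: frechet_derivative_works)
  then show ?thesis
    unfolding pd_def by (simp add: frechet_derivative_at[symmetric])
qed

lemma smooth_fun_coordinate_mult:
  assumes "smooth_fun f"
  shows "smooth_fun (\<lambda>y. (y \<bullet> e) * f y)"
proof -
  txt \<open>By the Leibniz rule, partial derivatives stay in this class.\<close>
  define leibniz where "leibniz g \<longleftrightarrow>
    (\<exists>f1 f2. smooth_fun f1 \<and> smooth_fun f2 \<and> g = (\<lambda>y. (y \<bullet> e) * f1 y + f2 y))" for g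
  have leibniz_pd: "leibniz (pd i g)" if "leibniz g" "i \<in> Basis" for g i
  proof -
    obtain f1 f2 where f: "smooth_fun f1" "smooth_fun f2" and g: "g = (\<lambda>y. (y \<bullet> e) * f1 y + f2 y)"
      using \<open>leibniz g\<close> unfolding leibniz_def by blast
    have "pd i g = (\<lambda>y. (y \<bullet> e) * pd i f1 y + (pd i f2 y + (i \<bullet> e) * f1 y))"
    proof
      fix x
      have "pd i g x = pd i (\<lambda>y. (y \<bullet> e) * f1 y) x + 1 * pd i f2 x"
        unfolding g using f
        by (subst pd_add_scaled[symmetric])
          (simp_all add: differentiable_coordinate_mult smooth_fun_differentiable)
      then show "pd i g x = (x \<bullet> e) * pd i f1 x + (pd i f2 x + (i \<bullet> e) * f1 x)"
        using f by (simp add: pd_coordinate_mult smooth_fun_differentiable)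
    qed
    then show ?thesis
      unfolding leibniz_def using f that(2) by (blast intro: smooth_fun_pd smooth_fun_add_scaled)
  qed
  have "leibniz (pds ds (\<lambda>y. (y \<bullet> e) * f y))" if "set ds \<subseteq> Basis" for ds
    using that
  proof (induction ds)
    case Nil
    have "smooth_fun (\<lambda>y::'a. 0)"
      using smooth_fun_add_scaled[OF assms assms, of "-1"] by simp
    then show ?case unfolding leibniz_def using assms by fastforce
  next
    case (Cons i ds)
    then show ?case by (simp add: leibniz_pd)
  qed
  moreover have "g differentiable (at x)" if "leibniz g" for g x
    using that unfolding leibniz_def
    by (metis differentiable_add differentiable_coordinate_mult smooth_fun_differentiable)
  ultimately show ?thesis
    unfolding smooth_fun_def by blast
qed

lemma test_fun_differentiable: "test_fun \<Omega> \<psi> \<Longrightarrow> \<psi> differentiable (at x)"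
  by (simp add: test_fun_iff_smooth_fun smooth_fun_differentiable)

lemma test_fun_pd_differentiable: "test_fun \<Omega> \<psi> \<Longrightarrow> i \<in> Basis \<Longrightarrow> pd i \<psi> differentiable (at x)"
  by (simp add: test_fun_iff_smooth_fun smooth_fun_differentiable smooth_fun_pd)

lemma test_fun_continuous: "test_fun \<Omega> \<psi> \<Longrightarrow> continuous_on UNIV \<psi>"
  by (meson differentiable_at_imp_differentiable_on differentiable_imp_continuous_on
      test_fun_differentiable)

lemma test_fun_pd_continuous: "test_fun \<Omega> \<psi> \<Longrightarrow> i \<in> Basis \<Longrightarrow> continuous_on UNIV (pd i \<psi>)"
  by (meson differentiable_at_imp_differentiable_on differentiable_imp_continuous_on
      test_fun_pd_differentiable)

lemma test_fun_cgrad_continuous: "test_fun \<Omega> \<psi> \<Longrightarrow> continuous_on UNIV (cgrad \<psi>)"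
  unfolding cgrad_def by (intro continuous_intros test_fun_pd_continuous) auto

lemma cgrad_inner_Basis: "e \<in> Basis \<Longrightarrow> cgrad \<psi> x \<bullet> e = pd e \<psi> x"
  by (simp add: cgrad_def inner_sum_left inner_Basis if_distrib cong: if_cong)

lemma test_fun_coordinate_mult:
  assumes "test_fun \<Omega> \<psi>"
  shows "test_fun \<Omega> (\<lambda>y. (y \<bullet> e) * \<psi> y)"
proof -
  have supp: "{x. (x \<bullet> e) * \<psi> x \<noteq> 0} \<subseteq> {x. \<psi> x \<noteq> 0}"
    by auto
  have "bounded {x. \<psi> x \<noteq> 0}"
    using assms by (simp add: test_fun_iff_smooth_fun)
  then have "compact (closure {x. (x \<bullet> e) * \<psi> x \<noteq> 0})"
    using supp by (simp add: bounded_subset)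
  moreover have "closure {x. (x \<bullet> e) * \<psi> x \<noteq> 0} \<subseteq> closure {x. \<psi> x \<noteq> 0}"
    using supp by (rule closure_mono)
  ultimately show ?thesis
    using assms
    unfolding test_fun_iff_smooth_fun by (blast intro: smooth_fun_coordinate_mult)
qed

section \<open>Square-integrable functions\<close>

lemma set_borel_measurable_iff_lebesgue_on:
  fixes f :: "'a::euclidean_space \<Rightarrow> 'b::real_normed_vector"
  assumes "S \<in> sets lebesgue"
  shows "set_borel_measurable lebesgue S f \<longleftrightarrow> f \<in> borel_measurable (lebesgue_on S)"
  using borel_measurable_restrict_space_iff[of S lebesgue f] assms
  by (simp add: set_borel_measurable_def)

lemma L2_iff_lebesgue_on:
  assumes "S \<in> sets lebesgue"
  shows "L2 S f \<longleftrightarrow> f \<in> borel_measurable (lebesgue_on S) \<and> set_integrable lebesgue S (\<lambda>x. (f x)\<^sup>2)"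
  unfolding L2_def set_borel_measurable_iff_lebesgue_on[OF assms] ..

lemma L2vec_iff_lebesgue_on:
  assumes "S \<in> sets lebesgue"
  shows "L2vec S g \<longleftrightarrow>
    g \<in> borel_measurable (lebesgue_on S) \<and> set_integrable lebesgue S (\<lambda>x. (norm (g x))\<^sup>2)"
  unfolding L2vec_def set_borel_measurable_iff_lebesgue_on[OF assms] ..

lemma set_integral_nonneg:
  fixes f :: "'a \<Rightarrow> real"
  assumes "\<And>x. x \<in> S \<Longrightarrow> 0 \<le> f x"
  shows "0 \<le> (LINT x:S|M. f x)"
  unfolding set_lebesgue_integral_def
  by (rule Bochner_Integration.integral_nonneg) (auto simp: assms split: split_indicator)

lemma L2_bounded:
  assumes "S \<in> lmeasurable" "f \<in> borel_measurable (lebesgue_on S)" "\<And>x. x \<in> S \<Longrightarrow> \<bar>f x\<bar> \<le> B"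
  shows "L2 S f"
proof -
  have "set_integrable lebesgue S (\<lambda>x. (f x)\<^sup>2)"
  proof (rule set_integrable_bound[of _ _ "\<lambda>x. B\<^sup>2"])
    show "set_integrable lebesgue S (\<lambda>x. B\<^sup>2)"
      using assms(1) by (rule absolutely_integrable_on_const)
    show "AE x in lebesgue. x \<in> S \<longrightarrow> norm ((f x)\<^sup>2) \<le> norm (B\<^sup>2)"
    proof (intro AE_I2 impI)
      fix x assume "x \<in> S"
      with assms(3) have "\<bar>f x\<bar>\<^sup>2 \<le> B\<^sup>2" by (intro power_mono) force+
      then show "norm ((f x)\<^sup>2) \<le> norm (B\<^sup>2)" by simp
    qed
  qed (use assms in \<open>simp add: set_borel_measurable_iff_lebesgue_on\<close>)
  with assms show ?thesis by (simp add: L2_iff_lebesgue_on)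
qed

lemma abs_mult_le_sum_squares: "\<bar>a * b\<bar> \<le> a\<^sup>2 + (b::real)\<^sup>2"
proof -
  have "2 * (\<bar>a\<bar> * \<bar>b\<bar>) \<le> a\<^sup>2 + b\<^sup>2"
    using sum_squares_bound[of "\<bar>a\<bar>" "\<bar>b\<bar>"] by (simp add: mult.assoc)
  moreover have "0 \<le> \<bar>a\<bar> * \<bar>b\<bar>"
    by simp
  ultimately show ?thesis
    unfolding abs_mult by linarith
qed

lemma L2_mult_integrable:
  assumes "S \<in> sets lebesgue" "L2 S f" "L2 S g"
  shows "set_integrable lebesgue S (\<lambda>x. f x * g x)"
proof (rule set_integrable_bound[of _ _ "\<lambda>x. (f x)\<^sup>2 + (g x)\<^sup>2"])
  show "set_integrable lebesgue S (\<lambda>x. (f x)\<^sup>2 + (g x)\<^sup>2)"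
    using assms unfolding L2_def by (intro set_integral_add(1)) auto
  show "set_borel_measurable lebesgue S (\<lambda>x. f x * g x)"
    using assms by (auto simp: set_borel_measurable_iff_lebesgue_on L2_iff_lebesgue_on)
  show "AE x in lebesgue. x \<in> S \<longrightarrow> norm (f x * g x) \<le> norm ((f x)\<^sup>2 + (g x)\<^sup>2)"
    by (intro AE_I2) (simp add: abs_mult_le_sum_squares)
qed

lemma L2_add_scaled:
  assumes "S \<in> sets lebesgue" "L2 S f" "L2 S g"
  shows "L2 S (\<lambda>x. f x + c * g x)"
proof -
  have "set_integrable lebesgue S (\<lambda>x. (f x)\<^sup>2 + (2 * c) * (f x * g x) + c\<^sup>2 * (g x)\<^sup>2)"
    using assms L2_mult_integrable[OF assms] unfolding L2_def
    by (intro set_integral_add(1) set_integrable_mult_right) auto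
  moreover have "(\<lambda>x. (f x)\<^sup>2 + (2 * c) * (f x * g x) + c\<^sup>2 * (g x)\<^sup>2) = (\<lambda>x. (f x + c * g x)\<^sup>2)"
    by (simp add: power2_eq_square algebra_simps)
  ultimately show ?thesis
    using assms by (auto simp: L2_iff_lebesgue_on)
qed

lemma L2_diff:
  assumes "S \<in> sets lebesgue" "L2 S f" "L2 S g"
  shows "L2 S (\<lambda>x. f x - g x)"
  using L2_add_scaled[OF assms, of "-1"] by simp

lemma L2_subset:
  assumes "L2 S f" "T \<subseteq> S" "S \<in> sets lebesgue" "T \<in> sets lebesgue"
  shows "L2 T f"
proof -
  have "f \<in> borel_measurable (lebesgue_on S)" "set_integrable lebesgue S (\<lambda>x. (f x)\<^sup>2)"
    using assms(1,3) by (simp_all add: L2_iff_lebesgue_on)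
  then show ?thesis
    unfolding L2_iff_lebesgue_on[OF assms(4)]
    using measurable_restrict_mono assms(2,4) set_integrable_subset by blast
qed

lemma L2_bounded_mult:
  assumes "L2 S f" "S \<in> sets lebesgue" "h \<in> borel_measurable (lebesgue_on S)"
    and "\<And>x. x \<in> S \<Longrightarrow> \<bar>h x\<bar> \<le> B"
  shows "L2 S (\<lambda>x. h x * f x)"
proof -
  have "set_integrable lebesgue S (\<lambda>x. (h x * f x)\<^sup>2)"
  proof (rule set_integrable_bound[of _ _ "\<lambda>x. B\<^sup>2 * (f x)\<^sup>2"])
    show "set_integrable lebesgue S (\<lambda>x. B\<^sup>2 * (f x)\<^sup>2)"
      using assms(1) unfolding L2_def by auto
    show "AE x in lebesgue. x \<in> S \<longrightarrow> norm ((h x * f x)\<^sup>2) \<le> norm (B\<^sup>2 * (f x)\<^sup>2)"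
    proof (intro AE_I2 impI)
      fix x assume "x \<in> S"
      with assms(4) have "\<bar>h x\<bar>\<^sup>2 \<le> B\<^sup>2" by (intro power_mono) force+
      then show "norm ((h x * f x)\<^sup>2) \<le> norm (B\<^sup>2 * (f x)\<^sup>2)"
        by (simp add: power_mult_distrib mult_right_mono)
    qed
  qed (use assms in \<open>auto simp: set_borel_measurable_iff_lebesgue_on L2_iff_lebesgue_on\<close>)
  with assms show ?thesis
    by (auto simp: L2_iff_lebesgue_on)
qed

lemma L2_coordinate_mult:
  assumes "L2 S f" "S \<in> sets lebesgue" "bounded S"
  shows "L2 S (\<lambda>x. (x \<bullet> e) * f x)"
proof -
  obtain B where "\<And>x. x \<in> S \<Longrightarrow> norm x \<le> B"
    using \<open>bounded S\<close> by (meson bounded_iff)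
  then have "\<bar>x \<bullet> e\<bar> \<le> B * norm e" if "x \<in> S" for x
    using that Cauchy_Schwarz_ineq2[of x e] by (meson mult_right_mono norm_ge_zero order_trans)
  moreover have "(\<lambda>x. x \<bullet> e) \<in> borel_measurable (lebesgue_on S)"
    using assms(2) by (intro continuous_imp_measurable_on_sets_lebesgue continuous_intros)
  ultimately show ?thesis
    using assms by (intro L2_bounded_mult) auto
qed

lemma L2_continuous:
  assumes "continuous_on UNIV f" "bounded S" "S \<in> sets lebesgue"
  shows "L2 S f"
proof -
  have "compact (f ` closure S)"
    using assms(2) by (intro compact_continuous_image continuous_on_subset[OF assms(1)]) auto
  then obtain B where "\<forall>y \<in> f ` closure S. norm y \<le> B"
    using compact_imp_bounded bounded_iff by blast
  then have "\<And>x. x \<in> S \<Longrightarrow> \<bar>f x\<bar> \<le> B"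
    using closure_subset by auto
  moreover have "f \<in> borel_measurable (lebesgue_on S)"
    using assms(1,3)
    by (meson continuous_imp_measurable_on_sets_lebesgue continuous_on_subset top_greatest)
  ultimately show ?thesis
    using assms by (intro L2_bounded) (auto simp: bounded_set_imp_lmeasurable)
qed

lemma L2vec_inner_Basis:
  assumes "L2vec S g" "S \<in> sets lebesgue" "e \<in> Basis"
  shows "L2 S (\<lambda>x. g x \<bullet> e)"
proof -
  have "set_integrable lebesgue S (\<lambda>x. (g x \<bullet> e)\<^sup>2)"
  proof (rule set_integrable_bound[of _ _ "\<lambda>x. (norm (g x))\<^sup>2"])
    show "AE x in lebesgue. x \<in> S \<longrightarrow> norm ((g x \<bullet> e)\<^sup>2) \<le> norm ((norm (g x))\<^sup>2)"
      using Basis_le_norm[OF assms(3)] by (intro AE_I2) (simp add: abs_le_square_iff[symmetric])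
  qed (use assms in \<open>auto simp: L2vec_iff_lebesgue_on set_borel_measurable_iff_lebesgue_on\<close>)
  with assms show ?thesis
    by (auto simp: L2vec_iff_lebesgue_on L2_iff_lebesgue_on)
qed

lemma L2vec_diff:
  assumes "S \<in> sets lebesgue" "L2vec S g1" "L2vec S g2"
  shows "L2vec S (\<lambda>x. g1 x - g2 x)"
proof -
  have "set_integrable lebesgue S (\<lambda>x. (norm (g1 x - g2 x))\<^sup>2)"
  proof (rule set_integrable_bound[of _ _ "\<lambda>x. 2 * (norm (g1 x))\<^sup>2 + 2 * (norm (g2 x))\<^sup>2"])
    show "set_integrable lebesgue S (\<lambda>x. 2 * (norm (g1 x))\<^sup>2 + 2 * (norm (g2 x))\<^sup>2)"
      using assms unfolding L2vec_def by (intro set_integral_add(1) set_integrable_mult_right) auto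
    show "AE x in lebesgue. x \<in> S \<longrightarrow>
        norm ((norm (g1 x - g2 x))\<^sup>2) \<le> norm (2 * (norm (g1 x))\<^sup>2 + 2 * (norm (g2 x))\<^sup>2)"
    proof (intro AE_I2 impI)
      fix x
      have "(norm (g1 x - g2 x))\<^sup>2 \<le> (norm (g1 x) + norm (g2 x))\<^sup>2"
        by (intro power_mono norm_triangle_ineq4) simp
      also have "\<dots> \<le> 2 * (norm (g1 x))\<^sup>2 + 2 * (norm (g2 x))\<^sup>2"
        unfolding power2_sum using sum_squares_bound[of "norm (g1 x)" "norm (g2 x)"] by linarith
      finally show "norm ((norm (g1 x - g2 x))\<^sup>2)
          \<le> norm (2 * (norm (g1 x))\<^sup>2 + 2 * (norm (g2 x))\<^sup>2)"
        by simp
    qed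
  qed (use assms in \<open>auto simp: L2vec_iff_lebesgue_on set_borel_measurable_iff_lebesgue_on\<close>)
  with assms show ?thesis
    by (auto simp: L2vec_iff_lebesgue_on)
qed

lemma L2vec_continuous:
  fixes g :: "'a::euclidean_space \<Rightarrow> 'a"
  assumes "continuous_on UNIV g" "bounded S" "S \<in> sets lebesgue"
  shows "L2vec S g"
proof -
  have "L2 S (\<lambda>x. norm (g x))"
    using assms by (intro L2_continuous continuous_intros) auto
  moreover have "g \<in> borel_measurable (lebesgue_on S)"
    using assms(1,3)
    by (meson continuous_imp_measurable_on_sets_lebesgue continuous_on_subset top_greatest)
  ultimately show ?thesis
    using assms(3) by (simp add: L2vec_iff_lebesgue_on L2_iff_lebesgue_on)
qed

lemma nonneg_quadratic_discriminant:
  fixes A B C :: real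
  assumes "\<And>t. 0 \<le> A + 2 * t * B + t\<^sup>2 * C" "0 \<le> C"
  shows "B\<^sup>2 \<le> A * C"
proof (cases "C = 0")
  case True
  have "B = 0"
  proof (rule ccontr)
    assume "B \<noteq> 0"
    have "0 \<le> A + 2 * (- (A + 1) / (2 * B)) * B"
      using assms(1)[of "- (A + 1) / (2 * B)"] True by simp
    also have "\<dots> = -1" using \<open>B \<noteq> 0\<close> by (simp add: field_simps)
    finally show False by simp
  qed
  then show ?thesis using True by simp
next
  case False
  with assms(2) have C: "C > 0" by simp
  have "0 \<le> A + 2 * (- B / C) * B + (- B / C)\<^sup>2 * C" by (rule assms(1))
  also have "\<dots> = (A * C - B\<^sup>2) / C" using C by (simp add: field_simps power2_eq_square)
  finally show ?thesis using C by (simp add: zero_le_divide_iff)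
qed

lemma L2_Cauchy_Schwarz:
  assumes "S \<in> sets lebesgue" "L2 S f" "L2 S g"
  shows "(LINT x:S|lebesgue. f x * g x)\<^sup>2
    \<le> (LINT x:S|lebesgue. (f x)\<^sup>2) * (LINT x:S|lebesgue. (g x)\<^sup>2)"
proof (rule nonneg_quadratic_discriminant)
  fix t :: real
  have "0 \<le> (LINT x:S|lebesgue. (f x + t * g x)\<^sup>2)"
    by (rule set_integral_nonneg) simp
  also have "(LINT x:S|lebesgue. (f x + t * g x)\<^sup>2)
      = (LINT x:S|lebesgue. (f x)\<^sup>2 + ((2 * t) * (f x * g x) + t\<^sup>2 * (g x)\<^sup>2))"
    by (simp add: power2_eq_square algebra_simps)
  also have "\<dots> = (LINT x:S|lebesgue. (f x)\<^sup>2) + 2 * t * (LINT x:S|lebesgue. f x * g x)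
      + t\<^sup>2 * (LINT x:S|lebesgue. (g x)\<^sup>2)"
    using assms L2_mult_integrable[OF assms] unfolding L2_def
    by (simp add: set_integral_add set_integrable_mult_right)
  finally show "0 \<le> (LINT x:S|lebesgue. (f x)\<^sup>2) + 2 * t * (LINT x:S|lebesgue. f x * g x)
      + t\<^sup>2 * (LINT x:S|lebesgue. (g x)\<^sup>2)" .
qed (rule set_integral_nonneg, simp)

lemma L2_integral_mult_eq_0:
  assumes "S \<in> sets lebesgue" "L2 S f" "L2 S g" "(LINT x:S|lebesgue. (g x)\<^sup>2) = 0"
  shows "(LINT x:S|lebesgue. f x * g x) = 0"
  using L2_Cauchy_Schwarz[OF assms(1-3)] assms(4) by simp

lemma set_integral_inner_Basis_sq_le:
  assumes "S \<in> sets lebesgue" "L2vec S g" "e \<in> Basis"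
  shows "(LINT x:S|lebesgue. (g x \<bullet> e)\<^sup>2) \<le> (LINT x:S|lebesgue. (norm (g x))\<^sup>2)"
  using assms L2vec_inner_Basis[OF assms(2,1,3)] Basis_le_norm[OF assms(3)]
  by (intro set_integral_mono) (auto simp: L2_def L2vec_def abs_le_square_iff[symmetric])

section \<open>Weak gradients and \<open>H\<^sup>1\<^sub>0\<close>\<close>

lemma weak_grad_diff:
  fixes \<Omega> :: "'a::euclidean_space set"
  assumes "bounded \<Omega>" "\<Omega> \<in> sets lebesgue" "H1 \<Omega> u gu" "H1 \<Omega> v gv"
  shows "weak_grad \<Omega> (\<lambda>x. u x - v x) (\<lambda>x. gu x - gv x)"
  unfolding weak_grad_def
proof (intro allI impI ballI)
  fix \<psi> :: "'a \<Rightarrow> real" and i :: 'a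
  assume \<psi>: "test_fun \<Omega> \<psi>" and i: "i \<in> Basis"
  have L2_test: "L2 \<Omega> \<psi>" "L2 \<Omega> (pd i \<psi>)"
    using assms(1,2) \<psi> i by (auto intro: L2_continuous test_fun_continuous test_fun_pd_continuous)
  have L2_uv: "L2 \<Omega> u" "L2 \<Omega> v" "L2 \<Omega> (\<lambda>x. gu x \<bullet> i)" "L2 \<Omega> (\<lambda>x. gv x \<bullet> i)"
    using assms(2-4) i by (auto simp: H1_def intro: L2vec_inner_Basis)
  have "(LINT x:\<Omega>|lebesgue. (u x - v x) * pd i \<psi> x)
      = (LINT x:\<Omega>|lebesgue. u x * pd i \<psi> x) - (LINT x:\<Omega>|lebesgue. v x * pd i \<psi> x)"
    using assms(2) L2_test L2_uv by (simp add: left_diff_distrib L2_mult_integrable)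
  also have "\<dots> = (LINT x:\<Omega>|lebesgue. (gv x \<bullet> i) * \<psi> x) - (LINT x:\<Omega>|lebesgue. (gu x \<bullet> i) * \<psi> x)"
    using assms(3,4) \<psi> i unfolding H1_def weak_grad_def by simp
  also have "\<dots> = - (LINT x:\<Omega>|lebesgue. ((gu x - gv x) \<bullet> i) * \<psi> x)"
    using assms(2) L2_test L2_uv by (simp add: inner_diff_left left_diff_distrib L2_mult_integrable)
  finally show "(LINT x:\<Omega>|lebesgue. (u x - v x) * pd i \<psi> x)
      = - (LINT x:\<Omega>|lebesgue. ((gu x - gv x) \<bullet> i) * \<psi> x)" .
qed

lemma test_fun_identity_defect_le:
  assumes "bounded \<Omega>" "\<Omega> \<in> sets lebesgue" "e \<in> Basis" "L2 \<Omega> f" "L2 \<Omega> g" "H1 \<Omega> z gz"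
    and "test_fun \<Omega> \<psi>"
    and "(LINT x:\<Omega>|lebesgue. f x * \<psi> x) + (LINT x:\<Omega>|lebesgue. g x * pd e \<psi> x) = 0"
  shows "((LINT x:\<Omega>|lebesgue. f x * z x) + (LINT x:\<Omega>|lebesgue. g x * (gz x \<bullet> e)))\<^sup>2
    \<le> (2 * (LINT x:\<Omega>|lebesgue. (f x)\<^sup>2) + 2 * (LINT x:\<Omega>|lebesgue. (g x)\<^sup>2))
      * Vnorm_sq \<Omega> (\<lambda>x. \<psi> x - z x) (\<lambda>x. cgrad \<psi> x - gz x)"
proof -
  have z: "L2 \<Omega> z" "L2vec \<Omega> gz" "L2 \<Omega> (\<lambda>x. gz x \<bullet> e)"
    using assms(2,3,6) by (auto simp: H1_def intro: L2vec_inner_Basis)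
  have \<psi>: "L2 \<Omega> \<psi>" "L2 \<Omega> (pd e \<psi>)" "L2vec \<Omega> (cgrad \<psi>)"
    using assms(1-3,7) by (auto intro: L2_continuous L2vec_continuous test_fun_continuous
        test_fun_pd_continuous test_fun_cgrad_continuous)
  define A where "A = (LINT x:\<Omega>|lebesgue. (f x)\<^sup>2)"
  define B where "B = (LINT x:\<Omega>|lebesgue. (g x)\<^sup>2)"
  define I1 where "I1 = (LINT x:\<Omega>|lebesgue. (\<psi> x - z x)\<^sup>2)"
  define I2 where "I2 = (LINT x:\<Omega>|lebesgue. (norm (cgrad \<psi> x - gz x))\<^sup>2)"
  define J where "J = (LINT x:\<Omega>|lebesgue. (pd e \<psi> x - gz x \<bullet> e)\<^sup>2)"
  define p where "p = (LINT x:\<Omega>|lebesgue. f x * (\<psi> x - z x))"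
  define q where "q = (LINT x:\<Omega>|lebesgue. g x * (pd e \<psi> x - gz x \<bullet> e))"
  have defect: "(LINT x:\<Omega>|lebesgue. f x * z x) + (LINT x:\<Omega>|lebesgue. g x * (gz x \<bullet> e)) = - (p + q)"
    using assms(2,4,5,8) \<psi> z by (simp add: p_def q_def right_diff_distrib L2_mult_integrable)
  have p: "p\<^sup>2 \<le> A * I1"
    unfolding p_def A_def I1_def using assms(2,4) \<psi> z by (intro L2_Cauchy_Schwarz L2_diff) auto
  have q: "q\<^sup>2 \<le> B * J"
    unfolding q_def B_def J_def using assms(2,5) \<psi> z by (intro L2_Cauchy_Schwarz L2_diff) auto
  have "J \<le> I2"
    using set_integral_inner_Basis_sq_le[OF assms(2) L2vec_diff[OF assms(2) \<psi>(3) z(2)] assms(3)]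
    by (simp add: J_def I2_def inner_diff_left cgrad_inner_Basis[OF assms(3)])
  moreover have "0 \<le> A" "0 \<le> B" "0 \<le> I1" "0 \<le> I2"
    unfolding A_def B_def I1_def I2_def by (auto intro: set_integral_nonneg)
  ultimately have "A * I1 \<le> A * (I1 + I2)" "B * J \<le> B * (I1 + I2)"
    by (auto intro!: mult_left_mono)
  have "(- (p + q))\<^sup>2 \<le> 2 * p\<^sup>2 + 2 * q\<^sup>2"
    unfolding power2_minus using sum_squares_bound[of p q] by (simp add: power2_sum)
  also have "\<dots> \<le> (2 * A + 2 * B) * (I1 + I2)"
    using p q \<open>A * I1 \<le> A * (I1 + I2)\<close> \<open>B * J \<le> B * (I1 + I2)\<close> by (simp add: algebra_simps)
  finally show ?thesis
    unfolding defect Vnorm_sq_def A_def B_def I1_def I2_def .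
qed

lemma H10_extend_test_fun_identity:
  assumes "bounded \<Omega>" "\<Omega> \<in> sets lebesgue" "e \<in> Basis" "L2 \<Omega> f" "L2 \<Omega> g"
    and test: "\<And>\<psi>. test_fun \<Omega> \<psi> \<Longrightarrow>
      (LINT x:\<Omega>|lebesgue. f x * \<psi> x) + (LINT x:\<Omega>|lebesgue. g x * pd e \<psi> x) = 0"
    and "H10 \<Omega> z gz"
  shows "(LINT x:\<Omega>|lebesgue. f x * z x) + (LINT x:\<Omega>|lebesgue. g x * (gz x \<bullet> e)) = 0"
proof -
  obtain \<psi>s where \<psi>s: "\<And>n. test_fun \<Omega> (\<psi>s n)"
    and lim: "(\<lambda>n. Vnorm_sq \<Omega> (\<lambda>x. \<psi>s n x - z x) (\<lambda>x. cgrad (\<psi>s n) x - gz x)) \<longlonglongrightarrow> 0"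
    and z: "H1 \<Omega> z gz"
    using \<open>H10 \<Omega> z gz\<close> unfolding H10_def by blast
  define C where "C = 2 * (LINT x:\<Omega>|lebesgue. (f x)\<^sup>2) + 2 * (LINT x:\<Omega>|lebesgue. (g x)\<^sup>2)"
  define L where "L = (LINT x:\<Omega>|lebesgue. f x * z x) + (LINT x:\<Omega>|lebesgue. g x * (gz x \<bullet> e))"
  have "L\<^sup>2 \<le> C * Vnorm_sq \<Omega> (\<lambda>x. \<psi>s n x - z x) (\<lambda>x. cgrad (\<psi>s n) x - gz x)" for n
    unfolding L_def C_def
    using test_fun_identity_defect_le[OF assms(1-5) z \<psi>s test[OF \<psi>s]] .
  moreover have "(\<lambda>n. C * Vnorm_sq \<Omega> (\<lambda>x. \<psi>s n x - z x) (\<lambda>x. cgrad (\<psi>s n) x - gz x)) \<longlonglongrightarrow> 0"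
    using tendsto_mult_right_zero[OF lim] .
  ultimately have "L\<^sup>2 \<le> 0"
    by (intro tendsto_le[OF trivial_limit_sequentially _ tendsto_const]) auto
  then show ?thesis
    unfolding L_def by simp
qed

text \<open>That is, \<open>\<partial>\<^sub>e (x\<^sub>e w) = w\<close> weakly if \<open>\<partial>\<^sub>e w = 0\<close>; test \<open>\<partial>\<^sub>e w = 0\<close> with \<open>x\<^sub>e \<psi>\<close>.\<close>
lemma weak_pd_coordinate_mult_identity:
  assumes "bounded \<Omega>" "\<Omega> \<in> sets lebesgue" "e \<in> Basis" "L2 \<Omega> w" "L2vec \<Omega> gw"
    and "weak_grad \<Omega> w gw" "(LINT x:\<Omega>|lebesgue. (gw x \<bullet> e)\<^sup>2) = 0" "test_fun \<Omega> \<psi>"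
  shows "(LINT x:\<Omega>|lebesgue. w x * \<psi> x) + (LINT x:\<Omega>|lebesgue. ((x \<bullet> e) * w x) * pd e \<psi> x) = 0"
proof -
  have L2s: "L2 \<Omega> \<psi>" "L2 \<Omega> (pd e \<psi>)" "L2 \<Omega> (\<lambda>x. (x \<bullet> e) * w x)" "L2 \<Omega> (\<lambda>x. (x \<bullet> e) * \<psi> x)"
    "L2 \<Omega> (\<lambda>x. gw x \<bullet> e)"
    using assms by (auto intro: L2_continuous L2_coordinate_mult L2vec_inner_Basis
        test_fun_continuous test_fun_pd_continuous)
  have pd_coordinate: "pd e (\<lambda>y. (y \<bullet> e) * \<psi> y) x = \<psi> x + (x \<bullet> e) * pd e \<psi> x" for x
    using assms(3,8) by (simp add: pd_coordinate_mult test_fun_differentiable inner_Basis)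
  have "(LINT x:\<Omega>|lebesgue. w x * \<psi> x) + (LINT x:\<Omega>|lebesgue. ((x \<bullet> e) * w x) * pd e \<psi> x)
      = (LINT x:\<Omega>|lebesgue. w x * \<psi> x + ((x \<bullet> e) * w x) * pd e \<psi> x)"
    using assms(2,4) L2s by (intro set_integral_add(2)[symmetric] L2_mult_integrable)
  also have "\<dots> = (LINT x:\<Omega>|lebesgue. w x * pd e (\<lambda>y. (y \<bullet> e) * \<psi> y) x)"
    unfolding pd_coordinate by (simp add: algebra_simps)
  also have "\<dots> = - (LINT x:\<Omega>|lebesgue. (gw x \<bullet> e) * ((x \<bullet> e) * \<psi> x))"
    using assms(3,6,8) test_fun_coordinate_mult unfolding weak_grad_def by blast
  also have "\<dots> = 0"
    using L2_integral_mult_eq_0[OF assms(2) L2s(4,5) assms(7)] by (simp add: mult.commute)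
  finally show ?thesis .
qed

text \<open>Extending the identity above to \<open>z = u\<close> and \<open>z = v\<close> gives, for \<open>w = u - v\<close>,
  \<open>\<integral> w\<^sup>2 = - \<integral> x\<^sub>e w \<partial>\<^sub>e w = 0\<close>.\<close>
lemma H10_diff_eq_0_if_grad_diff_eq_0:
  assumes "bounded \<Omega>" "\<Omega> \<in> sets lebesgue" "H10 \<Omega> u gu" "H10 \<Omega> v gv"
    and "(LINT x:\<Omega>|lebesgue. (norm (gu x - gv x))\<^sup>2) = 0"
  shows "(LINT x:\<Omega>|lebesgue. (u x - v x)\<^sup>2) = 0"
proof -
  obtain e :: 'a where e: "e \<in> Basis"
    using nonempty_Basis by blast
  have H1: "H1 \<Omega> u gu" "H1 \<Omega> v gv"
    using assms(3,4) by (auto simp: H10_def)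
  have L2s: "L2 \<Omega> u" "L2 \<Omega> v" "L2 \<Omega> (\<lambda>x. u x - v x)" "L2vec \<Omega> (\<lambda>x. gu x - gv x)"
    "L2 \<Omega> (\<lambda>x. gu x \<bullet> e)" "L2 \<Omega> (\<lambda>x. gv x \<bullet> e)"
    using assms(2) H1 e by (auto simp: H1_def intro: L2_diff L2vec_diff L2vec_inner_Basis)
  have L2_coord: "L2 \<Omega> (\<lambda>x. (x \<bullet> e) * (u x - v x))" "L2 \<Omega> (\<lambda>x. (gu x - gv x) \<bullet> e)"
    using assms(1,2) e L2s by (auto intro: L2_coordinate_mult L2vec_inner_Basis)
  have grad_e: "(LINT x:\<Omega>|lebesgue. ((gu x - gv x) \<bullet> e)\<^sup>2) = 0"
    using set_integral_inner_Basis_sq_le[OF assms(2) L2s(4) e] assms(5)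
    by (simp add: order_antisym set_integral_nonneg)
  have test: "(LINT x:\<Omega>|lebesgue. (u x - v x) * \<psi> x)
      + (LINT x:\<Omega>|lebesgue. ((x \<bullet> e) * (u x - v x)) * pd e \<psi> x) = 0"
    if "test_fun \<Omega> \<psi>" for \<psi>
    using weak_pd_coordinate_mult_identity[OF assms(1,2) e L2s(3,4) weak_grad_diff[OF assms(1,2) H1]
        grad_e that] .
  have identity: "(LINT x:\<Omega>|lebesgue. (u x - v x) * z x)
      + (LINT x:\<Omega>|lebesgue. ((x \<bullet> e) * (u x - v x)) * (gz x \<bullet> e)) = 0"
    if "H10 \<Omega> z gz" for z gz
    by (rule H10_extend_test_fun_identity[OF assms(1,2) e L2s(3) L2_coord(1) _ that]) (rule test)
  have "(LINT x:\<Omega>|lebesgue. (u x - v x) * (u x - v x))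
      = - (LINT x:\<Omega>|lebesgue. ((x \<bullet> e) * (u x - v x)) * ((gu x - gv x) \<bullet> e))"
    using identity[OF assms(3)] identity[OF assms(4)] assms(2) L2s L2_coord
    by (simp add: right_diff_distrib inner_diff_left L2_mult_integrable)
  also have "\<dots> = 0"
    using L2_integral_mult_eq_0[OF assms(2) L2_coord grad_e] by simp
  finally show ?thesis
    by (simp add: power2_eq_square)
qed

section \<open>The energy derivative\<close>

lemma phi_nonneg: "0 < c0 \<Longrightarrow> c0 < c1 \<Longrightarrow> 0 \<le> phi c0 c1 z"
  by (simp add: phi_def)

lemma phi_le_1: "0 < c0 \<Longrightarrow> c0 < c1 \<Longrightarrow> phi c0 c1 z \<le> 1"
  by (simp add: phi_def)

lemma antimono_phi:
  assumes "0 < c0" "c0 < c1"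
  shows "antimono (phi c0 c1)"
proof (rule antimonoI)
  fix a b :: real assume "a \<le> b"
  show "phi c0 c1 b \<le> phi c0 c1 a"
  proof (cases "b \<le> c0")
    case True
    have "(c0 - a) * (c1 - b) - (c0 - b) * (c1 - a) = (b - a) * (c1 - c0)"
      by (simp add: algebra_simps)
    moreover have "0 \<le> (b - a) * (c1 - c0)"
      using \<open>a \<le> b\<close> assms by simp
    ultimately have "(c0 - b) * (c1 - a) \<le> (c0 - a) * (c1 - b)"
      by linarith
    with True \<open>a \<le> b\<close> assms show ?thesis
      by (simp add: phi_def divide_simps)
  qed (use phi_nonneg[OF assms] in \<open>simp add: phi_def\<close>)
qed

lemma phi_measurable: "phi c0 c1 \<in> borel_measurable borel"
  unfolding phi_def by measurable

lemma antimono_diff_mult_diff_nonpos: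
  fixes f :: "real \<Rightarrow> real"
  assumes "antimono f"
  shows "(f a - f b) * (a - b) \<le> 0"
  using assms by (cases "a \<le> b") (auto simp: antimono_def mult_le_0_iff)

lemma L2vec_weighted_inner_integrable:
  assumes "S \<in> sets lebesgue" "L2vec S g1" "L2vec S g2"
    and "b \<in> borel_measurable (lebesgue_on S)" "\<And>x. \<bar>b x\<bar> \<le> M"
  shows "set_integrable lebesgue S (\<lambda>x. b x * (g1 x \<bullet> g2 x))"
proof (rule set_integrable_bound[of _ _ "\<lambda>x. M * ((norm (g1 x))\<^sup>2 + (norm (g2 x))\<^sup>2)"])
  show "set_integrable lebesgue S (\<lambda>x. M * ((norm (g1 x))\<^sup>2 + (norm (g2 x))\<^sup>2))"
    using assms unfolding L2vec_def by (intro set_integral_add(1) set_integrable_mult_right) auto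
  show "set_borel_measurable lebesgue S (\<lambda>x. b x * (g1 x \<bullet> g2 x))"
    using assms by (auto simp: set_borel_measurable_iff_lebesgue_on L2vec_iff_lebesgue_on)
  show "AE x in lebesgue. x \<in> S \<longrightarrow>
      norm (b x * (g1 x \<bullet> g2 x)) \<le> norm (M * ((norm (g1 x))\<^sup>2 + (norm (g2 x))\<^sup>2))"
  proof (intro AE_I2 impI)
    fix x
    have "\<bar>g1 x \<bullet> g2 x\<bar> \<le> norm (g1 x) * norm (g2 x)"
      by (rule Cauchy_Schwarz_ineq2)
    also have "\<dots> \<le> (norm (g1 x))\<^sup>2 + (norm (g2 x))\<^sup>2"
      using abs_mult_le_sum_squares[of "norm (g1 x)" "norm (g2 x)"] by simp
    finally have "\<bar>b x\<bar> * \<bar>g1 x \<bullet> g2 x\<bar> \<le> M * ((norm (g1 x))\<^sup>2 + (norm (g2 x))\<^sup>2)"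
      using assms(5)[of x] by (intro mult_mono) auto
    moreover have "0 \<le> M"
      using assms(5)[of x] by linarith
    ultimately show "norm (b x * (g1 x \<bullet> g2 x)) \<le> norm (M * ((norm (g1 x))\<^sup>2 + (norm (g2 x))\<^sup>2))"
      by (simp add: abs_mult abs_of_nonneg)
  qed
qed

lemma weighted_gradient_diff_ge:
  assumes "S \<in> sets lebesgue" "L2vec S gu" "L2vec S gv"
    and "b \<in> borel_measurable (lebesgue_on S)" "\<And>x. m \<le> b x" "\<And>x. \<bar>b x\<bar> \<le> M"
  shows "m * (LINT x:S|lebesgue. (norm (gu x - gv x))\<^sup>2)
    \<le> (LINT x:S|lebesgue. b x * (gu x \<bullet> (gu x - gv x)))
      - (LINT x:S|lebesgue. b x * (gv x \<bullet> (gu x - gv x)))"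
proof -
  have gw: "L2vec S (\<lambda>x. gu x - gv x)"
    using assms(1-3) by (rule L2vec_diff)
  have "m * (LINT x:S|lebesgue. (norm (gu x - gv x))\<^sup>2)
      \<le> (LINT x:S|lebesgue. b x * ((gu x - gv x) \<bullet> (gu x - gv x)))"
    using gw L2vec_weighted_inner_integrable[OF assms(1) gw gw assms(4,6)] assms(5)
    by (subst set_integral_mult_right[symmetric], intro set_integral_mono)
      (auto simp: L2vec_def power2_norm_eq_inner[symmetric] mult_right_mono)
  also have "\<dots> = (LINT x:S|lebesgue. b x * (gu x \<bullet> (gu x - gv x)))
      - (LINT x:S|lebesgue. b x * (gv x \<bullet> (gu x - gv x)))"
    using L2vec_weighted_inner_integrable[OF assms(1) _ gw assms(4,6)] assms(2,3)
    by (simp add: inner_diff_left right_diff_distrib)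
  finally show ?thesis .
qed

lemma phi_reaction_diff_nonpos:
  assumes "S \<in> lmeasurable" "L2 S u" "L2 S v" "0 < c0" "c0 < c1"
  shows "(LINT x:S|lebesgue. phi c0 c1 (u x) * (u x - v x))
    - (LINT x:S|lebesgue. phi c0 c1 (v x) * (u x - v x)) \<le> 0"
proof -
  have S: "S \<in> sets lebesgue"
    using assms(1) by blast
  have L2_phi: "L2 S (\<lambda>x. phi c0 c1 (f x))" if "L2 S f" for f
    using that S phi_nonneg[OF assms(4,5)] phi_le_1[OF assms(4,5)]
    by (intro L2_bounded[OF assms(1), where B=1])
      (auto simp: L2_iff_lebesgue_on intro: measurable_compose[OF _ phi_measurable])
  have "(LINT x:S|lebesgue. phi c0 c1 (u x) * (u x - v x))
      - (LINT x:S|lebesgue. phi c0 c1 (v x) * (u x - v x))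
      = (LINT x:S|lebesgue. (phi c0 c1 (u x) - phi c0 c1 (v x)) * (u x - v x))"
    using S assms(2,3) L2_phi L2_diff[OF S assms(2,3)]
    by (simp add: left_diff_distrib L2_mult_integrable)
  also have "\<dots> \<le> (LINT x:S|lebesgue. 0)"
    using S assms(2,3) L2_phi antimono_diff_mult_diff_nonpos[OF antimono_phi[OF assms(4,5)]]
    by (intro set_integral_mono L2_mult_integrable L2_diff) auto
  also have "\<dots> = 0"
    by simp
  finally show ?thesis .
qed

lemma Ederiv_diff_ge:
  assumes "\<Omega> \<in> sets lebesgue" "\<Omega>1 \<subseteq> \<Omega>" "\<Omega>1 \<in> lmeasurable"
    and "b \<in> borel_measurable (lebesgue_on \<Omega>)" "\<And>x. m \<le> b x" "\<And>x. \<bar>b x\<bar> \<le> M"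
    and "0 < c0" "c0 < c1" "H1 \<Omega> u gu" "H1 \<Omega> v gv"
  shows "m * (LINT x:\<Omega>|lebesgue. (norm (gu x - gv x))\<^sup>2)
    \<le> Ederiv \<Omega> \<Omega>1 b c0 c1 u gu (\<lambda>x. u x - v x) (\<lambda>x. gu x - gv x)
     - Ederiv \<Omega> \<Omega>1 b c0 c1 v gv (\<lambda>x. u x - v x) (\<lambda>x. gu x - gv x)"
proof -
  have "L2 \<Omega>1 u" "L2 \<Omega>1 v"
    using assms(1-3,9,10) by (auto simp: H1_def intro: L2_subset)
  then show ?thesis
    using weighted_gradient_diff_ge[OF assms(1) _ _ assms(4-6), of gu gv]
      phi_reaction_diff_nonpos[OF assms(3) _ _ assms(7,8), of u v] assms(9,10)
    unfolding Ederiv_def H1_def by linarith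
qed

lemma coeff_b_measurable: "coeff_b \<Omega>1 b1 b2 \<in> borel_measurable (lebesgue_on S)"
proof -
  have [measurable]: "closure \<Omega>1 \<in> sets borel"
    by simp
  have "coeff_b \<Omega>1 b1 b2 \<in> borel_measurable borel"
    unfolding coeff_b_def by measurable
  then show ?thesis
    by (intro measurable_restrict_space1 measurable_completion) simp
qed

lemma ex_pos_factor_le:
  fixes m D G W :: real
  assumes "0 < m" "m * G \<le> D" "0 \<le> W" "0 \<le> G" "G = 0 \<Longrightarrow> W = 0"
  shows "\<exists>\<gamma>>0. \<gamma> * (W + G) \<le> D"
proof (cases "G = 0")
  case True
  with assms show ?thesis
    by (intro exI[of _ 1]) auto
next
  case False
  with assms(4) have "0 < G"
    by simp
  with assms(1) have "0 < m * G"
    by simp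
  with \<open>0 < G\<close> assms(2,3) have "0 < D" "0 < W + G"
    by linarith+
  then show ?thesis
    by (intro exI[of _ "D / (W + G)"]) simp
qed

theorem lemma4p2:
  fixes \<Omega> \<Omega>1 :: "'a::euclidean_space set"
    and b1 b2 c0 c1 :: real
    and u v :: "'a \<Rightarrow> real" and gu gv :: "'a \<Rightarrow> 'a"
  assumes "DIM('a) \<ge> 2"
    and "open \<Omega>" and "connected \<Omega>" and "compact (closure \<Omega>)"
    and "open \<Omega>1" and "connected \<Omega>1" and "\<Omega>1 \<subseteq> \<Omega>"
    and "frontier \<Omega>1 \<subseteq> \<Omega>" and "C2_closed_hypersurface (frontier \<Omega>1)"
    and "b1 > 0" and "b2 > 0" and "0 < c0" and "c0 < c1"
    and "H10 \<Omega> u gu" and "H10 \<Omega> v gv"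
  shows "\<exists>\<gamma>>0.
     Ederiv \<Omega> \<Omega>1 (coeff_b \<Omega>1 b1 b2) c0 c1 u gu (\<lambda>x. u x - v x) (\<lambda>x. gu x - gv x)
   - Ederiv \<Omega> \<Omega>1 (coeff_b \<Omega>1 b1 b2) c0 c1 v gv (\<lambda>x. u x - v x) (\<lambda>x. gu x - gv x)
   \<ge> \<gamma> * Vnorm_sq \<Omega> (\<lambda>x. u x - v x) (\<lambda>x. gu x - gv x)"
proof -
  have bounded: "bounded \<Omega>" "bounded \<Omega>1"
    using assms(4,7) by (meson bounded_subset closure_subset compact_imp_bounded)+
  have measurable: "\<Omega> \<in> sets lebesgue" "\<Omega>1 \<in> lmeasurable"
    using assms(2,5) bounded by (auto intro: bounded_set_imp_lmeasurable)
  have "min b1 b2 * (LINT x:\<Omega>|lebesgue. (norm (gu x - gv x))\<^sup>2)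
    \<le> Ederiv \<Omega> \<Omega>1 (coeff_b \<Omega>1 b1 b2) c0 c1 u gu (\<lambda>x. u x - v x) (\<lambda>x. gu x - gv x)
     - Ederiv \<Omega> \<Omega>1 (coeff_b \<Omega>1 b1 b2) c0 c1 v gv (\<lambda>x. u x - v x) (\<lambda>x. gu x - gv x)"
    using assms(10-15) by (intro Ederiv_diff_ge[OF measurable(1) assms(7) measurable(2)
        coeff_b_measurable, where M = "max b1 b2"]) (auto simp: coeff_b_def H10_def)
  moreover have "(LINT x:\<Omega>|lebesgue. (norm (gu x - gv x))\<^sup>2) = 0
      \<Longrightarrow> (LINT x:\<Omega>|lebesgue. (u x - v x)\<^sup>2) = 0"
    using bounded(1) measurable(1) assms(14,15) by (rule H10_diff_eq_0_if_grad_diff_eq_0)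
  ultimately show ?thesis
    unfolding Vnorm_sq_def using assms(10,11)
    by (intro ex_pos_factor_le) (auto intro: set_integral_nonneg)
qed

end
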